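(* Let $U_1,U_2$ be regular trees of valence $4$. Suppose there is a torsion-free irreducible lattice $L_0$ acting cocompactly on $U_1\times U_2$ such that $L_0$ is residually finite. Then there is a torsion-free irreducible lattice $L$ (a finite index subgroup of $L_0$) acting properly and cocompactly on $U_1\times U_2$ without exchanging the two factors, and a vertex $z_0\in U_2$, such that, with $U_{1,z_0}$ the quotient of $U_1\times\{z_0\}$ by the stabilizer in $L$ of $U_1\times\{z_0\}$: each edge of $U_{1,z_0}$ is embedded, and the edges of $U_{1,z_0}$ can be labeled by elements of $\{w_1,w_2,w_3,w_4\}$ so that distinct edges incident to a common vertex have different labels.
   Context: Irreducible: no finite index subgroup is a direct product of two infinite groups. A lattice here acts properly discontinuously by tree-product automorphisms. *)

theory Defs
  imports "HOL-Algebra.Algebra"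
begin

definition walk :: "('v \<Rightarrow> 'v \<Rightarrow> bool) \<Rightarrow> 'v list \<Rightarrow> bool" where
  "walk E xs \<longleftrightarrow> xs \<noteq> [] \<and> (\<forall>i. Suc i < length xs \<longrightarrow> E (xs ! i) (xs ! Suc i))"

definition reduced :: "'v list \<Rightarrow> bool" where
  "reduced xs \<longleftrightarrow> (\<forall>i. i + 2 < length xs \<longrightarrow> xs ! i \<noteq> xs ! (i + 2))"

definition is_tree :: "'v set \<Rightarrow> ('v \<Rightarrow> 'v \<Rightarrow> bool) \<Rightarrow> bool" where
  "is_tree V E \<longleftrightarrow> V \<noteq> {} \<and> (\<forall>x y. E x y \<longrightarrow> x \<in> V \<and> y \<in> V) \<and>
     (\<forall>x y. E x y \<longrightarrow> E y x) \<and> (\<forall>x. \<not> E x x) \<and>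
     (\<forall>u\<in>V. \<forall>v\<in>V. \<exists>!xs. walk E xs \<and> reduced xs \<and> hd xs = u \<and> last xs = v)"

definition regular_tree :: "'v set \<Rightarrow> ('v \<Rightarrow> 'v \<Rightarrow> bool) \<Rightarrow> nat \<Rightarrow> bool" where
  "regular_tree V E k \<longleftrightarrow> is_tree V E \<and> (\<forall>v\<in>V. finite {w. E v w} \<and> card {w. E v w} = k)"

definition graph_iso :: "'v set \<Rightarrow> ('v \<Rightarrow> 'v \<Rightarrow> bool) \<Rightarrow> 'v set \<Rightarrow> ('v \<Rightarrow> 'v \<Rightarrow> bool)
    \<Rightarrow> ('v \<Rightarrow> 'v) \<Rightarrow> bool" where
  "graph_iso VA EA VB EB h \<longleftrightarrow> bij_betw h VA VB \<and>
     (\<forall>x\<in>VA. \<forall>y\<in>VA. EA x y \<longleftrightarrow> EB (h x) (h y))"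

definition factor_preserving ::
  "'v set \<Rightarrow> ('v \<Rightarrow> 'v \<Rightarrow> bool) \<Rightarrow> 'v set \<Rightarrow> ('v \<Rightarrow> 'v \<Rightarrow> bool) \<Rightarrow> ('v \<times> 'v \<Rightarrow> 'v \<times> 'v) \<Rightarrow> bool" where
  "factor_preserving V1 E1 V2 E2 f \<longleftrightarrow>
     (\<exists>g1 g2. graph_iso V1 E1 V1 E1 g1 \<and> graph_iso V2 E2 V2 E2 g2 \<and>
        (\<forall>x\<in>V1. \<forall>y\<in>V2. f (x, y) = (g1 x, g2 y)))"

definition factor_exchanging ::
  "'v set \<Rightarrow> ('v \<Rightarrow> 'v \<Rightarrow> bool) \<Rightarrow> 'v set \<Rightarrow> ('v \<Rightarrow> 'v \<Rightarrow> bool) \<Rightarrow> ('v \<times> 'v \<Rightarrow> 'v \<times> 'v) \<Rightarrow> bool" where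
  "factor_exchanging V1 E1 V2 E2 f \<longleftrightarrow>
     (\<exists>h1 h2. graph_iso V2 E2 V1 E1 h1 \<and> graph_iso V1 E1 V2 E2 h2 \<and>
        (\<forall>x\<in>V1. \<forall>y\<in>V2. f (x, y) = (h1 y, h2 x)))"

definition prod_aut ::
  "'v set \<Rightarrow> ('v \<Rightarrow> 'v \<Rightarrow> bool) \<Rightarrow> 'v set \<Rightarrow> ('v \<Rightarrow> 'v \<Rightarrow> bool) \<Rightarrow> ('v \<times> 'v \<Rightarrow> 'v \<times> 'v) \<Rightarrow> bool" where
  "prod_aut V1 E1 V2 E2 f \<longleftrightarrow>
     factor_preserving V1 E1 V2 E2 f \<or> factor_exchanging V1 E1 V2 E2 f"

definition TPG :: "'v set \<Rightarrow> 'v set \<Rightarrow> ('v \<times> 'v \<Rightarrow> 'v \<times> 'v) set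
    \<Rightarrow> ('v \<times> 'v \<Rightarrow> 'v \<times> 'v) monoid" where
  "TPG V1 V2 L = (BijGroup (V1 \<times> V2)) \<lparr>carrier := L\<rparr>"

text \<open>A lattice: a group of tree-product automorphisms acting properly discontinuously
(for every finite set K of vertices only finitely many g satisfy gK \<inter> K \<noteq> {}).\<close>
definition tp_lattice ::
  "'v set \<Rightarrow> ('v \<Rightarrow> 'v \<Rightarrow> bool) \<Rightarrow> 'v set \<Rightarrow> ('v \<Rightarrow> 'v \<Rightarrow> bool) \<Rightarrow> ('v \<times> 'v \<Rightarrow> 'v \<times> 'v) set \<Rightarrow> bool" where
  "tp_lattice V1 E1 V2 E2 L \<longleftrightarrow>
     subgroup L (BijGroup (V1 \<times> V2)) \<and> (\<forall>f\<in>L. prod_aut V1 E1 V2 E2 f) \<and>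
     (\<forall>K. K \<subseteq> V1 \<times> V2 \<and> finite K \<longrightarrow> finite {g\<in>L. g ` K \<inter> K \<noteq> {}})"

definition cocompact :: "'v set \<Rightarrow> 'v set \<Rightarrow> ('v \<times> 'v \<Rightarrow> 'v \<times> 'v) set \<Rightarrow> bool" where
  "cocompact V1 V2 L \<longleftrightarrow> (\<exists>K. finite K \<and> K \<subseteq> V1 \<times> V2 \<and> V1 \<times> V2 = (\<Union>g\<in>L. g ` K))"

definition finite_index :: "('a, 'b) monoid_scheme \<Rightarrow> 'a set \<Rightarrow> bool" where
  "finite_index G H \<longleftrightarrow> subgroup H G \<and> finite (rcosets\<^bsub>G\<^esub> H)"

definition torsion_free :: "('a, 'b) monoid_scheme \<Rightarrow> bool" where
  "torsion_free G \<longleftrightarrow> (\<forall>g\<in>carrier G. g \<noteq> \<one>\<^bsub>G\<^esub> \<longrightarrow> (\<forall>n::nat. n > 0 \<longrightarrow> g [^]\<^bsub>G\<^esub> n \<noteq> \<one>\<^bsub>G\<^esub>))"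

definition residually_finite :: "('a, 'b) monoid_scheme \<Rightarrow> bool" where
  "residually_finite G \<longleftrightarrow> (\<forall>g\<in>carrier G. g \<noteq> \<one>\<^bsub>G\<^esub> \<longrightarrow>
      (\<exists>N. normal N G \<and> finite (rcosets\<^bsub>G\<^esub> N) \<and> g \<notin> N))"

definition internal_direct_product :: "('a, 'b) monoid_scheme \<Rightarrow> 'a set \<Rightarrow> 'a set \<Rightarrow> 'a set \<Rightarrow> bool" where
  "internal_direct_product G H A B \<longleftrightarrow> subgroup A G \<and> subgroup B G \<and> A \<subseteq> H \<and> B \<subseteq> H \<and>
     (\<forall>a\<in>A. \<forall>b\<in>B. a \<otimes>\<^bsub>G\<^esub> b = b \<otimes>\<^bsub>G\<^esub> a) \<and> A \<inter> B = {\<one>\<^bsub>G\<^esub>} \<and> A <#>\<^bsub>G\<^esub> B = H"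

definition irreducible_grp :: "('a, 'b) monoid_scheme \<Rightarrow> bool" where
  "irreducible_grp G \<longleftrightarrow> \<not> (\<exists>H A B. finite_index G H \<and> internal_direct_product G H A B \<and>
        infinite A \<and> infinite B)"

definition slice_stab :: "'v set \<Rightarrow> ('v \<times> 'v \<Rightarrow> 'v \<times> 'v) set \<Rightarrow> 'v \<Rightarrow> ('v \<times> 'v \<Rightarrow> 'v \<times> 'v) set" where
  "slice_stab V1 L z0 = {g\<in>L. g ` (V1 \<times> {z0}) = V1 \<times> {z0}}"

definition slice_orbit :: "('v \<times> 'v \<Rightarrow> 'v \<times> 'v) set \<Rightarrow> 'v \<Rightarrow> 'v \<Rightarrow> 'v set" where
  "slice_orbit S z0 x = {fst (g (x, z0)) | g. g \<in> S}"

definition slice_edge_orbit :: "('v \<times> 'v \<Rightarrow> 'v \<times> 'v) set \<Rightarrow> 'v \<Rightarrow> 'v \<Rightarrow> 'v \<Rightarrow> 'v set set" where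
  "slice_edge_orbit S z0 x y = {{fst (g (x, z0)), fst (g (y, z0))} | g. g \<in> S}"

definition quotient_edges :: "'v set \<Rightarrow> ('v \<Rightarrow> 'v \<Rightarrow> bool) \<Rightarrow> ('v \<times> 'v \<Rightarrow> 'v \<times> 'v) set \<Rightarrow> 'v \<Rightarrow> 'v set set set" where
  "quotient_edges V1 E1 S z0 = {slice_edge_orbit S z0 x y | x y. x \<in> V1 \<and> y \<in> V1 \<and> E1 x y}"

definition share_vertex :: "('v \<times> 'v \<Rightarrow> 'v \<times> 'v) set \<Rightarrow> 'v \<Rightarrow> 'v set set \<Rightarrow> 'v set set \<Rightarrow> bool" where
  "share_vertex S z0 e1 e2 \<longleftrightarrow> (\<exists>a\<in>\<Union>e1. \<exists>b\<in>\<Union>e2. slice_orbit S z0 a = slice_orbit S z0 b)"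

datatype wlabel = w1 | w2 | w3 | w4

end

theory Submission
  imports Defs
begin

text \<open>Let L be the subgroup of L0 of elements preserving the types of vertices, i.e. the
  bipartition classes of both trees. Since L0 permutes the four types, L has finite index in L0,
  so it is again a torsion-free irreducible cocompact lattice, and a type-preserving element
  cannot exchange the two factors. The stabiliser of the slice U1 x {z0} in L preserves the
  bipartition of U1, so adjacent vertices lie in different orbits and the quotient U_{1,z0} is a
  bipartite multigraph, finite by cocompactness, of maximal degree 4. By Koenig's edge colouring
  theorem, proved with the usual Kempe interchange, its edges can be coloured with four labels.\<close>

section \<open>Bipartition of trees\<close>

lemma tree_edge_in_vertices: "is_tree V E \<Longrightarrow> E x y \<Longrightarrow> x \<in> V \<and> y \<in> V"
  unfolding is_tree_def by blast

lemma tree_edge_sym: "is_tree V E \<Longrightarrow> E x y \<Longrightarrow> E y x"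
  unfolding is_tree_def by blast

lemma tree_reduced_walk_unique:
  "is_tree V E \<Longrightarrow> u \<in> V \<Longrightarrow> v \<in> V \<Longrightarrow> \<exists>!xs. walk E xs \<and> reduced xs \<and> hd xs = u \<and> last xs = v"
  unfolding is_tree_def by blast

lemma walk_Cons_Cons: "walk E (x # y # xs) \<longleftrightarrow> E x y \<and> walk E (y # xs)"
  unfolding walk_def by (auto simp: nth_Cons split: nat.splits)

lemma walk_singleton: "walk E [x]"
  unfolding walk_def by simp

lemma walk_snoc: "xs \<noteq> [] \<Longrightarrow> walk E (xs @ [y]) \<longleftrightarrow> walk E xs \<and> E (last xs) y"
  by (induction xs rule: induct_list012) (auto simp: walk_Cons_Cons walk_singleton)

lemma reduced_snoc:
  "reduced (xs @ [y]) \<longleftrightarrow> reduced xs \<and> (\<forall>i. Suc (Suc i) = length xs \<longrightarrow> xs ! i \<noteq> y)"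
  unfolding reduced_def by (auto simp: nth_append less_Suc_eq)

lemma walk_edge_invariant:
  assumes "walk E xs" "\<And>x y. E x y \<Longrightarrow> f x = f y"
  shows "f (hd xs) = f (last xs)"
  using assms(1)
proof (induction xs rule: induct_list012)
  case (3 x y zs)
  then have "E x y" "walk E (y # zs)" by (simp_all add: walk_Cons_Cons)
  then show ?case using 3(2) assms(2)[of x y] by simp
qed (simp_all add: walk_def)

lemma tree_edge_invariant:
  assumes "is_tree V E" "\<And>x y. E x y \<Longrightarrow> f x = f y" "u \<in> V" "v \<in> V"
  shows "f u = f v"
proof -
  obtain xs where "walk E xs" "hd xs = u" "last xs = v"
    using tree_reduced_walk_unique[OF assms(1,3,4)] by blast
  then show ?thesis using walk_edge_invariant[of E xs f] assms(2) by simp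
qed

lemma regular_tree_has_edge:
  assumes "regular_tree V E k" "0 < k"
  obtains x y where "E x y"
proof -
  obtain x where x: "x \<in> V" using assms(1) unfolding regular_tree_def is_tree_def by blast
  then have "{y. E x y} \<noteq> {}" using assms unfolding regular_tree_def by fastforce
  then show ?thesis using that by blast
qed

definition two_colouring :: "('v \<Rightarrow> 'v \<Rightarrow> bool) \<Rightarrow> ('v \<Rightarrow> bool) \<Rightarrow> bool" where
  "two_colouring E c \<longleftrightarrow> (\<forall>x y. E x y \<longrightarrow> c x \<noteq> c y)"

lemma tree_two_colouring:
  assumes T: "is_tree V E"
  shows "\<exists>c. two_colouring E c"
proof -
  obtain b where b: "b \<in> V" using T unfolding is_tree_def by blast
  define W where "W x = (THE xs. walk E xs \<and> reduced xs \<and> hd xs = b \<and> last xs = x)" for x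
  have W: "walk E (W x) \<and> reduced (W x) \<and> hd (W x) = b \<and> last (W x) = x"
    and W_unique: "walk E xs \<and> reduced xs \<and> hd xs = b \<and> last xs = x \<Longrightarrow> W x = xs"
    if "x \<in> V" for x xs
    using theI'[OF tree_reduced_walk_unique[OF T b that]]
      the1_equality[OF tree_reduced_walk_unique[OF T b that]] unfolding W_def by blast+
  have "even (length (W x)) \<noteq> even (length (W y))" if "E x y" for x y
  proof -
    have xy: "x \<in> V" "y \<in> V" using tree_edge_in_vertices[OF T that] by auto
    define w where "w = W x"
    have w: "walk E w" "reduced w" "hd w = b" "last w = x" "w \<noteq> []"
      using W[OF xy(1)] unfolding w_def walk_def by auto
    show ?thesis
    proof (cases "\<exists>i. Suc (Suc i) = length w \<and> w ! i = y")
      case True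
      then obtain i where i: "Suc (Suc i) = length w" "w ! i = y" by blast
      obtain u where u: "w = u @ [x]" using append_butlast_last_id[OF w(5)] w(4) by metis
      then have "length u = Suc i" using i(1) by simp
      then have u_ne: "u \<noteq> []" by auto
      have "last u = y" using last_conv_nth[OF u_ne] \<open>length u = Suc i\<close> i(2) u by (simp add: nth_append)
      moreover have "walk E u" "reduced u" "hd u = b"
        using w(1-3) unfolding u by (simp_all add: walk_snoc[OF u_ne] reduced_snoc hd_append2[OF u_ne])
      ultimately have "W y = u" using W_unique[OF xy(2)] by blast
      then show ?thesis using u unfolding w_def by simp
    next
      case False
      then have "W y = w @ [y]"
        using W_unique[OF xy(2)] w that by (simp add: walk_snoc[OF w(5)] reduced_snoc)
      then show ?thesis unfolding w_def by simp
    qed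
  qed
  then have "two_colouring E (\<lambda>x. even (length (W x)))" unfolding two_colouring_def by blast
  then show ?thesis by blast
qed

lemma graph_iso_two_colouring_cong:
  assumes iso: "graph_iso VA EA VB EB h" and T: "is_tree VA EA"
    and cA: "two_colouring EA cA" and cB: "two_colouring EB cB"
    and x: "x \<in> VA" "x' \<in> VA" and eq: "cA x = cA x'"
  shows "cB (h x) = cB (h x')"
proof -
  have "(cB (h x) = cA x) = (cB (h x') = cA x')"
  proof (rule tree_edge_invariant[OF T _ x])
    fix u v assume "EA u v"
    moreover have "EB (h u) (h v)"
      using iso tree_edge_in_vertices[OF T \<open>EA u v\<close>] \<open>EA u v\<close> unfolding graph_iso_def by blast
    ultimately show "(cB (h u) = cA u) = (cB (h v) = cA v)"
      using cA cB unfolding two_colouring_def by blast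
  qed
  then show ?thesis using eq by blast
qed

section \<open>Koenig's edge colouring theorem\<close>

text \<open>A bipartite multigraph is given by its edge set F and the maps l and r sending each
  edge to its endpoints on the two sides.\<close>

context
  fixes l :: "'e \<Rightarrow> 'a" and r :: "'e \<Rightarrow> 'b"
begin

definition proper_edge_colouring :: "nat \<Rightarrow> 'e set \<Rightarrow> ('e \<Rightarrow> nat) \<Rightarrow> bool" where
  "proper_edge_colouring k F col \<longleftrightarrow> (\<forall>e\<in>F. col e < k) \<and>
     (\<forall>e\<in>F. \<forall>e'\<in>F. e \<noteq> e' \<and> (l e = l e' \<or> r e = r e') \<longrightarrow> col e \<noteq> col e')"

lemma proper_edge_colouring_swap:
  assumes col: "proper_edge_colouring k F col" and ab: "a < k" "b < k"
    and C: "C \<subseteq> F" "\<forall>f\<in>C. col f \<in> {a, b}"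
    and closed: "\<And>f f'. f \<in> C \<Longrightarrow> f' \<in> F \<Longrightarrow> l f = l f' \<or> r f = r f' \<Longrightarrow> col f' \<in> {a, b} \<Longrightarrow> f' \<in> C"
  shows "proper_edge_colouring k F (\<lambda>f. if f \<in> C then transpose a b (col f) else col f)"
    (is "proper_edge_colouring k F ?col'")
  unfolding proper_edge_colouring_def
proof (intro conjI ballI impI)
  fix e assume "e \<in> F"
  then show "?col' e < k" using col ab C(2) unfolding proper_edge_colouring_def by auto
next
  fix e e' assume e: "e \<in> F" "e' \<in> F" and adj: "e \<noteq> e' \<and> (l e = l e' \<or> r e = r e')"
  then have ne: "col e \<noteq> col e'" using col unfolding proper_edge_colouring_def by blast
  have in_ab: "transpose a b (col f) \<in> {a, b}" if "f \<in> C" for f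
    using C(2) that by (auto simp: transpose_def)
  show "?col' e \<noteq> ?col' e'"
  proof (cases "e \<in> C"; cases "e' \<in> C")
    assume "e \<in> C" "e' \<in> C"
    then show ?thesis using ne transpose_eq_imp_eq by metis
  next
    assume "e \<in> C" "e' \<notin> C"
    then have "col e' \<notin> {a, b}" using closed[of e e'] e(2) adj by blast
    then show ?thesis using in_ab[OF \<open>e \<in> C\<close>] \<open>e \<in> C\<close> \<open>e' \<notin> C\<close> by auto
  next
    assume "e \<notin> C" "e' \<in> C"
    then have "col e \<notin> {a, b}" using closed[of e' e] e(1) adj by metis
    then show ?thesis using in_ab[OF \<open>e' \<in> C\<close>] \<open>e \<notin> C\<close> \<open>e' \<in> C\<close> by auto
  next
    assume "e \<notin> C" "e' \<notin> C"
    then show ?thesis using ne by simp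
  qed
qed

lemma proper_edge_colouring_insert:
  assumes "proper_edge_colouring k F col" "a < k"
    and "\<forall>f\<in>F. l f = l e \<longrightarrow> col f \<noteq> a" "\<forall>f\<in>F. r f = r e \<longrightarrow> col f \<noteq> a"
  shows "proper_edge_colouring k (insert e F) (col(e := a))"
  using assms unfolding proper_edge_colouring_def by auto

lemma exists_free_colour:
  assumes "finite A" "card A < k"
  shows "\<exists>a<k. \<forall>f\<in>A. col f \<noteq> a"
proof -
  have "card (col ` A) < card {..<k}" using card_image_le[OF assms(1), of col] assms(2) by simp
  then have "\<not> {..<k} \<subseteq> col ` A" using card_mono[OF finite_imageI[OF assms(1)]] leD by blast
  then show ?thesis by blast
qed

text \<open>Alternating paths of colours a and b starting at the right vertex v0: a-edges are
  entered through their right and b-edges through their left endpoint.\<close>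
inductive_set kempe_chain :: "'e set \<Rightarrow> ('e \<Rightarrow> nat) \<Rightarrow> nat \<Rightarrow> nat \<Rightarrow> 'b \<Rightarrow> 'e set"
  for F col a b v0 where
  start: "f \<in> F \<Longrightarrow> col f = a \<Longrightarrow> r f = v0 \<Longrightarrow> f \<in> kempe_chain F col a b v0"
| left: "g \<in> kempe_chain F col a b v0 \<Longrightarrow> col g = a \<Longrightarrow> f \<in> F \<Longrightarrow> col f = b \<Longrightarrow> l f = l g
     \<Longrightarrow> f \<in> kempe_chain F col a b v0"
| right: "g \<in> kempe_chain F col a b v0 \<Longrightarrow> col g = b \<Longrightarrow> f \<in> F \<Longrightarrow> col f = a \<Longrightarrow> r f = r g
     \<Longrightarrow> f \<in> kempe_chain F col a b v0"

lemma kempe_chain_cases: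
  assumes "f \<in> kempe_chain F col a b v0" "a \<noteq> b"
  shows "f \<in> F \<and>
    (col f = a \<and> (r f = v0 \<or> (\<exists>g\<in>kempe_chain F col a b v0. col g = b \<and> r g = r f)) \<or>
     col f = b \<and> (\<exists>g\<in>kempe_chain F col a b v0. col g = a \<and> l g = l f))"
  using assms by induction (auto intro: kempe_chain.intros)

lemma kempe_chain_avoids_left:
  assumes "f \<in> kempe_chain F col a b v0" "a \<noteq> b" "\<forall>f\<in>F. l f = u \<longrightarrow> col f \<noteq> a"
  shows "l f \<noteq> u"
proof
  assume "l f = u"
  moreover have "\<exists>g\<in>F. col g = a \<and> l g = l f"
    using kempe_chain_cases[OF assms(1,2)] kempe_chain_cases[OF _ assms(2)] by blast
  ultimately show False using assms(3) by blast
qed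

lemma proper_edge_colouring_eq:
  "proper_edge_colouring k F col \<Longrightarrow> e \<in> F \<Longrightarrow> e' \<in> F \<Longrightarrow> col e = col e' \<Longrightarrow>
    l e = l e' \<or> r e = r e' \<Longrightarrow> e = e'"
  unfolding proper_edge_colouring_def by blast

lemma kempe_chain_closed:
  assumes col: "proper_edge_colouring k F col" and ab: "a \<noteq> b"
    and v0: "\<forall>f\<in>F. r f = v0 \<longrightarrow> col f \<noteq> b"
    and f: "f \<in> kempe_chain F col a b v0" and f': "f' \<in> F" "l f = l f' \<or> r f = r f'" "col f' \<in> {a, b}"
  shows "f' \<in> kempe_chain F col a b v0"
proof -
  let ?C = "kempe_chain F col a b v0"
  have same_colour: "f' \<in> ?C" if "g \<in> ?C" "col g = col f'" "l g = l f' \<or> r g = r f'" for g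
    using proper_edge_colouring_eq[OF col _ f'(1) that(2,3)] kempe_chain_cases[OF that(1) ab] that(1)
    by blast
  note f_cases = kempe_chain_cases[OF f ab]
  consider "col f' = col f" | "col f = a" "col f' = b" | "col f = b" "col f' = a"
    using f_cases f'(3) by blast
  then show ?thesis
  proof cases
    case 1
    then show ?thesis using same_colour[OF f] f'(2) by simp
  next
    case 2
    show ?thesis
    proof (cases "l f = l f'")
      case True
      then show ?thesis using kempe_chain.left[OF f _ f'(1)] 2 by simp
    next
      case False
      then have "r f = r f'" "r f \<noteq> v0" using f' v0 2 by auto
      then obtain g where "g \<in> ?C" "col g = b" "r g = r f'" using f_cases 2 ab by auto
      then show ?thesis using same_colour 2 by simp
    qed
  next
    case 3
    show ?thesis
    proof (cases "r f = r f'")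
      case True
      then show ?thesis using kempe_chain.right[OF f _ f'(1)] 3 by simp
    next
      case False
      then obtain g where "g \<in> ?C" "col g = a" "l g = l f'" using f_cases f'(2) 3 ab by auto
      then show ?thesis using same_colour 3 by simp
    qed
  qed
qed

text \<open>Kempe interchange: swapping a and b along the alternating path from v0 frees a at v0;
  the path never reaches u, where a is missing.\<close>
lemma exists_common_free_colour:
  assumes col: "proper_edge_colouring k F col" and ab: "a < k" "b < k"
    and u: "\<forall>f\<in>F. l f = u \<longrightarrow> col f \<noteq> a" and v0: "\<forall>f\<in>F. r f = v0 \<longrightarrow> col f \<noteq> b"
  shows "\<exists>col'. proper_edge_colouring k F col' \<and>
    (\<forall>f\<in>F. l f = u \<longrightarrow> col' f \<noteq> a) \<and> (\<forall>f\<in>F. r f = v0 \<longrightarrow> col' f \<noteq> a)"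
proof (cases "a = b")
  case True
  then show ?thesis using col u v0 by blast
next
  case False
  let ?C = "kempe_chain F col a b v0"
  let ?col' = "\<lambda>f. if f \<in> ?C then transpose a b (col f) else col f"
  have C: "?C \<subseteq> F" "\<forall>f\<in>?C. col f \<in> {a, b}"
    using kempe_chain_cases[OF _ False] by blast+
  have "proper_edge_colouring k F ?col'"
    using proper_edge_colouring_swap[OF col ab C kempe_chain_closed[OF col False v0]] .
  moreover have "?col' f \<noteq> a" if "f \<in> F" "l f = u" for f
    using u that kempe_chain_avoids_left[OF _ False u] by auto
  moreover have "?col' f \<noteq> a" if f: "f \<in> F" "r f = v0" for f
  proof (cases "f \<in> ?C")
    case True
    then have "col f = a" using C(2) v0 f by auto
    then show ?thesis using True False by simp
  next
    case False
    then have "col f \<noteq> a" using kempe_chain.start[OF f(1) _ f(2)] by blast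
    then show ?thesis using False by simp
  qed
  ultimately show ?thesis by blast
qed

theorem bipartite_edge_colouring:
  assumes "finite F" "\<And>v. card {e\<in>F. l e = v} \<le> k" "\<And>v. card {e\<in>F. r e = v} \<le> k"
  shows "\<exists>col. proper_edge_colouring k F col"
  using assms
proof (induction F rule: finite_induct)
  case empty
  then show ?case unfolding proper_edge_colouring_def by simp
next
  case (insert e F)
  have "{f\<in>insert e F. l f = l e} = insert e {f\<in>F. l f = l e}"
    "{f\<in>insert e F. r f = r e} = insert e {f\<in>F. r f = r e}" by auto
  then have deg: "card {f\<in>F. l f = l e} < k" "card {f\<in>F. r f = r e} < k"
    using insert(1,2) insert(4)[of "l e"] insert(5)[of "r e"] by simp_all
  have "card {f\<in>F. l f = u} \<le> card {f\<in>insert e F. l f = u}"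
    "card {f\<in>F. r f = v} \<le> card {f\<in>insert e F. r f = v}" for u v
    using insert(1) by (auto intro: card_mono)
  then have "card {f\<in>F. l f = u} \<le> k" "card {f\<in>F. r f = v} \<le> k" for u v
    using insert(4)[of u] insert(5)[of v] le_trans by blast+
  then obtain col where col: "proper_edge_colouring k F col" using insert.IH by presburger
  obtain a where a: "a < k" "\<forall>f\<in>F. l f = l e \<longrightarrow> col f \<noteq> a"
    using exists_free_colour[OF _ deg(1), of col] insert(1) by auto
  obtain b where b: "b < k" "\<forall>f\<in>F. r f = r e \<longrightarrow> col f \<noteq> b"
    using exists_free_colour[OF _ deg(2), of col] insert(1) by auto
  obtain col' where col': "proper_edge_colouring k F col'"
    "\<forall>f\<in>F. l f = l e \<longrightarrow> col' f \<noteq> a" "\<forall>f\<in>F. r f = r e \<longrightarrow> col' f \<noteq> a"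
    using exists_common_free_colour[OF col a(1) b(1) a(2) b(2)] by blast
  show ?case using proper_edge_colouring_insert[OF col'(1) a(1) col'(2,3)] by blast
qed

end

section \<open>Subgroups of finite index\<close>

lemma BijGroup_mult_apply:
  "f \<in> carrier (BijGroup S) \<Longrightarrow> g \<in> carrier (BijGroup S) \<Longrightarrow> x \<in> S \<Longrightarrow>
    (f \<otimes>\<^bsub>BijGroup S\<^esub> g) x = f (g x)"
  by (simp add: BijGroup_def compose_def)

lemma BijGroup_one_apply: "x \<in> S \<Longrightarrow> \<one>\<^bsub>BijGroup S\<^esub> x = x"
  by (simp add: BijGroup_def)

lemma BijGroup_apply_closed: "f \<in> carrier (BijGroup S) \<Longrightarrow> x \<in> S \<Longrightarrow> f x \<in> S"
  using Bij_imp_funcset by (fastforce simp: BijGroup_def)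

lemma BijGroup_inv_apply:
  assumes "f \<in> carrier (BijGroup S)" "x \<in> S"
  shows "f ((inv\<^bsub>BijGroup S\<^esub> f) x) = x" "(inv\<^bsub>BijGroup S\<^esub> f) (f x) = x"
proof -
  have f: "f \<in> Bij S" "bij_betw f S S" using assms(1) by (simp_all add: BijGroup_def Bij_def)
  show "f ((inv\<^bsub>BijGroup S\<^esub> f) x) = x" "(inv\<^bsub>BijGroup S\<^esub> f) (f x) = x"
    using assms(2) f(2) BijGroup_apply_closed[OF assms]
    by (simp_all add: inv_BijGroup[OF f(1)] bij_betw_def f_inv_into_f inv_into_f_f)
qed

lemma subgroup_BijGroup_invariant:
  assumes L: "subgroup L (BijGroup S)"
  shows "subgroup {f\<in>L. \<forall>x\<in>S. \<tau> (f x) = \<tau> x} (BijGroup S)"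
proof (rule group.subgroupI[OF group_BijGroup])
  have car: "f \<in> carrier (BijGroup S)" if "f \<in> L" for f using subgroup.mem_carrier[OF L that] .
  show "{f\<in>L. \<forall>x\<in>S. \<tau> (f x) = \<tau> x} \<subseteq> carrier (BijGroup S)" using car by blast
  have "\<one>\<^bsub>BijGroup S\<^esub> \<in> {f\<in>L. \<forall>x\<in>S. \<tau> (f x) = \<tau> x}"
    using subgroup.one_closed[OF L] by (simp add: BijGroup_def)
  then show "{f\<in>L. \<forall>x\<in>S. \<tau> (f x) = \<tau> x} \<noteq> {}" by blast
  fix f g assume f: "f \<in> {f\<in>L. \<forall>x\<in>S. \<tau> (f x) = \<tau> x}" and g: "g \<in> {f\<in>L. \<forall>x\<in>S. \<tau> (f x) = \<tau> x}"
  then have fL: "f \<in> L" and gL: "g \<in> L" by auto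
  have "\<tau> ((inv\<^bsub>BijGroup S\<^esub> f) x) = \<tau> x" if x: "x \<in> S" for x
  proof -
    have "(inv\<^bsub>BijGroup S\<^esub> f) x \<in> S"
      using BijGroup_apply_closed[OF group.inv_closed[OF group_BijGroup car[OF fL]] x] .
    then have "\<tau> (f ((inv\<^bsub>BijGroup S\<^esub> f) x)) = \<tau> ((inv\<^bsub>BijGroup S\<^esub> f) x)" using f by blast
    then show ?thesis using BijGroup_inv_apply(1)[OF car[OF fL] x] by simp
  qed
  then show "inv\<^bsub>BijGroup S\<^esub> f \<in> {f\<in>L. \<forall>x\<in>S. \<tau> (f x) = \<tau> x}"
    using f subgroup.m_inv_closed[OF L] by blast
  have "\<tau> ((f \<otimes>\<^bsub>BijGroup S\<^esub> g) x) = \<tau> x" if x: "x \<in> S" for x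
    using f g x BijGroup_mult_apply[OF car[OF fL] car[OF gL] x] BijGroup_apply_closed[OF car[OF gL] x]
    by simp
  then show "f \<otimes>\<^bsub>BijGroup S\<^esub> g \<in> {f\<in>L. \<forall>x\<in>S. \<tau> (f x) = \<tau> x}"
    using f g subgroup.m_closed[OF L] by blast
qed

lemma subgroup_BijGroup_setwise_stabiliser:
  assumes L: "subgroup L (BijGroup S)" and A: "A \<subseteq> S"
  shows "subgroup {f\<in>L. f ` A = A} (BijGroup S)"
proof (rule group.subgroupI[OF group_BijGroup])
  have car: "f \<in> carrier (BijGroup S)" if "f \<in> L" for f using subgroup.mem_carrier[OF L that] .
  show "{f\<in>L. f ` A = A} \<subseteq> carrier (BijGroup S)" using car by blast
  have "\<one>\<^bsub>BijGroup S\<^esub> ` A = A" using A by (force simp: BijGroup_def)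
  then show "{f\<in>L. f ` A = A} \<noteq> {}" using subgroup.one_closed[OF L] by blast
  fix f g assume f: "f \<in> {f\<in>L. f ` A = A}" and g: "g \<in> {f\<in>L. f ` A = A}"
  then have fL: "f \<in> L" and fA: "f ` A = A" and gL: "g \<in> L" and gA: "g ` A = A" by auto
  have "(inv\<^bsub>BijGroup S\<^esub> f) ` A = (inv\<^bsub>BijGroup S\<^esub> f) ` f ` A" using fA by simp
  also have "\<dots> = A" using A BijGroup_inv_apply(2)[OF car[OF fL]] by (force simp: image_comp)
  finally show "inv\<^bsub>BijGroup S\<^esub> f \<in> {f\<in>L. f ` A = A}" using fL subgroup.m_inv_closed[OF L] by blast
  have "(f \<otimes>\<^bsub>BijGroup S\<^esub> g) ` A = f ` g ` A"
    using A BijGroup_mult_apply[OF car[OF fL] car[OF gL]] by (force simp: image_comp)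
  then show "f \<otimes>\<^bsub>BijGroup S\<^esub> g \<in> {f\<in>L. f ` A = A}" using fL gL fA gA subgroup.m_closed[OF L] by auto
qed

lemma subgroup_carrier_update_iff:
  assumes "group G" "subgroup L G"
  shows "subgroup H (G\<lparr>carrier := L\<rparr>) \<longleftrightarrow> subgroup H G \<and> H \<subseteq> L"
  using group.incl_subgroup[OF assms] group.subgroup_incl[OF assms(1) _ assms(2)]
    subgroup.subset[of H "G\<lparr>carrier := L\<rparr>"] by auto

lemma rcosets_carrier_update: "rcosets\<^bsub>G\<lparr>carrier := L\<rparr>\<^esub> H = (\<lambda>a. H #>\<^bsub>G\<^esub> a) ` L"
  by (auto simp: RCOSETS_def r_coset_def)

lemma finite_rcosets_imp_transversal:
  assumes G: "group G" and H: "subgroup H G" and L: "L \<subseteq> carrier G"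
    and fin: "finite ((\<lambda>a. H #>\<^bsub>G\<^esub> a) ` L)"
  shows "\<exists>R. finite R \<and> R \<subseteq> L \<and> L \<subseteq> H <#>\<^bsub>G\<^esub> R"
proof (intro exI conjI)
  let ?rep = "inv_into L (\<lambda>a. H #>\<^bsub>G\<^esub> a)"
  show "finite (?rep ` (\<lambda>a. H #>\<^bsub>G\<^esub> a) ` L)" using fin by blast
  show "?rep ` (\<lambda>a. H #>\<^bsub>G\<^esub> a) ` L \<subseteq> L" by (auto intro: inv_into_into)
  show "L \<subseteq> H <#>\<^bsub>G\<^esub> ?rep ` (\<lambda>a. H #>\<^bsub>G\<^esub> a) ` L"
  proof
    fix a assume a: "a \<in> L"
    have "H #>\<^bsub>G\<^esub> ?rep (H #>\<^bsub>G\<^esub> a) = H #>\<^bsub>G\<^esub> a"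
      using f_inv_into_f[OF imageI[OF a]] .
    then have "a \<in> H #>\<^bsub>G\<^esub> ?rep (H #>\<^bsub>G\<^esub> a)" using group.rcos_self[OF G _ H] a L by auto
    then show "a \<in> H <#>\<^bsub>G\<^esub> ?rep ` (\<lambda>a. H #>\<^bsub>G\<^esub> a) ` L"
      using a unfolding r_coset_def set_mult_def by blast
  qed
qed

lemma transversal_imp_finite_rcosets:
  assumes G: "group G" and H: "subgroup H G" and T: "finite T" "T \<subseteq> carrier G"
    and L: "L \<subseteq> H <#>\<^bsub>G\<^esub> T"
  shows "finite ((\<lambda>a. H #>\<^bsub>G\<^esub> a) ` L)"
proof (rule finite_subset[OF _ finite_imageI[OF T(1)]])
  show "(\<lambda>a. H #>\<^bsub>G\<^esub> a) ` L \<subseteq> (\<lambda>a. H #>\<^bsub>G\<^esub> a) ` T"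
  proof
    fix Y assume "Y \<in> (\<lambda>a. H #>\<^bsub>G\<^esub> a) ` L"
    then obtain h b where hb: "h \<in> H" "b \<in> T" "Y = H #>\<^bsub>G\<^esub> (h \<otimes>\<^bsub>G\<^esub> b)"
      using L unfolding set_mult_def by blast
    have "H #>\<^bsub>G\<^esub> (h \<otimes>\<^bsub>G\<^esub> b) = (H #>\<^bsub>G\<^esub> h) #>\<^bsub>G\<^esub> b"
      using group.coset_mult_assoc[OF G subgroup.subset[OF H]] hb T(2) subgroup.mem_carrier[OF H]
      by auto
    also have "\<dots> = H #>\<^bsub>G\<^esub> b" using subgroup.rcos_const[OF H G hb(1)] by simp
    finally show "Y \<in> (\<lambda>a. H #>\<^bsub>G\<^esub> a) ` T" using hb by blast
  qed
qed

lemma finite_index_trans: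
  assumes G: "group G" and L: "subgroup L G"
    and H: "finite_index (G\<lparr>carrier := L\<rparr>) H" and H': "finite_index (G\<lparr>carrier := H\<rparr>) H'"
  shows "finite_index (G\<lparr>carrier := L\<rparr>) H'"
proof -
  have HG: "subgroup H G" "H \<subseteq> L"
    using H subgroup_carrier_update_iff[OF G L] unfolding finite_index_def by blast+
  have H'G: "subgroup H' G" "H' \<subseteq> H"
    using H' subgroup_carrier_update_iff[OF G HG(1)] unfolding finite_index_def by blast+
  obtain R where R: "finite R" "R \<subseteq> L" "L \<subseteq> H <#>\<^bsub>G\<^esub> R"
    using finite_rcosets_imp_transversal[OF G HG(1) subgroup.subset[OF L]] H
    unfolding finite_index_def rcosets_carrier_update by blast
  obtain R' where R': "finite R'" "R' \<subseteq> H" "H \<subseteq> H' <#>\<^bsub>G\<^esub> R'"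
    using finite_rcosets_imp_transversal[OF G H'G(1) subgroup.subset[OF HG(1)]] H'
    unfolding finite_index_def rcosets_carrier_update by blast
  have car: "R \<subseteq> carrier G" "R' \<subseteq> carrier G" "H' \<subseteq> carrier G"
    using R(2) R'(2) subgroup.subset[OF L] subgroup.subset[OF HG(1)] subgroup.subset[OF H'G(1)]
    by auto
  have "L \<subseteq> (H' <#>\<^bsub>G\<^esub> R') <#>\<^bsub>G\<^esub> R"
    using R(3) mono_set_mult[OF R'(3) order_refl] by (rule order_trans)
  also have "\<dots> = H' <#>\<^bsub>G\<^esub> (R' <#>\<^bsub>G\<^esub> R)" using group.set_mult_assoc[OF G car(3,2,1)] .
  finally have "L \<subseteq> H' <#>\<^bsub>G\<^esub> (R' <#>\<^bsub>G\<^esub> R)" .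
  moreover have "finite (R' <#>\<^bsub>G\<^esub> R)" using R(1) R'(1) unfolding set_mult_def by simp
  moreover have "R' <#>\<^bsub>G\<^esub> R \<subseteq> carrier G" using group.setmult_subset_G[OF G car(2,1)] .
  ultimately have "finite ((\<lambda>a. H' #>\<^bsub>G\<^esub> a) ` L)"
    using transversal_imp_finite_rcosets[OF G H'G(1)] by blast
  then show ?thesis
    using H'G HG subgroup_carrier_update_iff[OF G L] unfolding finite_index_def rcosets_carrier_update
    by blast
qed

lemma finite_index_of_finite_invariant:
  assumes G: "group G" and L: "subgroup L G" and H: "subgroup H G" "H \<subseteq> L"
    and fin: "finite (\<phi> ` L)"
    and inv: "\<And>a b. a \<in> L \<Longrightarrow> b \<in> L \<Longrightarrow> \<phi> a = \<phi> b \<Longrightarrow> a \<otimes>\<^bsub>G\<^esub> inv\<^bsub>G\<^esub> b \<in> H"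
  shows "finite_index (G\<lparr>carrier := L\<rparr>) H"
proof -
  let ?rep = "inv_into L \<phi>"
  have "H #>\<^bsub>G\<^esub> a = H #>\<^bsub>G\<^esub> ?rep (\<phi> a)" if a: "a \<in> L" for a
  proof -
    have rep: "?rep (\<phi> a) \<in> L" "\<phi> (?rep (\<phi> a)) = \<phi> a"
      using a by (auto intro: inv_into_into f_inv_into_f)
    have "a \<in> H #>\<^bsub>G\<^esub> ?rep (\<phi> a)"
      using subgroup.rcos_module_rev[OF H(1) G] inv[OF a rep(1) rep(2)[symmetric]] rep(1) a
        subgroup.mem_carrier[OF L] by blast
    then show ?thesis using group.repr_independence[OF G _ _ H(1)] rep(1) subgroup.mem_carrier[OF L]
      by metis
  qed
  then have "(\<lambda>a. H #>\<^bsub>G\<^esub> a) ` L \<subseteq> (\<lambda>y. H #>\<^bsub>G\<^esub> ?rep y) ` \<phi> ` L" by blast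
  then have "finite (rcosets\<^bsub>G\<lparr>carrier := L\<rparr>\<^esub> H)"
    unfolding rcosets_carrier_update using fin finite_subset by blast
  then show ?thesis unfolding finite_index_def using subgroup_carrier_update_iff[OF G L] H by blast
qed

lemma torsion_free_mono:
  "torsion_free (G\<lparr>carrier := L\<rparr>) \<Longrightarrow> H \<subseteq> L \<Longrightarrow> torsion_free (G\<lparr>carrier := H\<rparr>)"
  unfolding torsion_free_def by (auto simp: nat_pow_def)

lemma irreducible_finite_index:
  assumes G: "group G" and L: "subgroup L G"
    and H: "finite_index (G\<lparr>carrier := L\<rparr>) H" and irr: "irreducible_grp (G\<lparr>carrier := L\<rparr>)"
  shows "irreducible_grp (G\<lparr>carrier := H\<rparr>)"
  unfolding irreducible_grp_def
proof
  assume "\<exists>H' A B. finite_index (G\<lparr>carrier := H\<rparr>) H' \<and>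
    internal_direct_product (G\<lparr>carrier := H\<rparr>) H' A B \<and> infinite A \<and> infinite B"
  then obtain H' A B where H': "finite_index (G\<lparr>carrier := H\<rparr>) H'"
    and prod: "internal_direct_product (G\<lparr>carrier := H\<rparr>) H' A B" and inf: "infinite A" "infinite B"
    by blast
  have HG: "subgroup H G" "H \<subseteq> L"
    using H subgroup_carrier_update_iff[OF G L] unfolding finite_index_def by blast+
  have "subgroup A G" "A \<subseteq> H" "subgroup B G" "B \<subseteq> H"
    using prod subgroup_carrier_update_iff[OF G HG(1)] unfolding internal_direct_product_def by blast+
  then have "internal_direct_product (G\<lparr>carrier := L\<rparr>) H' A B"
    using prod HG(2) subgroup_carrier_update_iff[OF G L]
    unfolding internal_direct_product_def set_mult_def by auto
  then show False using irr finite_index_trans[OF G L H H'] inf unfolding irreducible_grp_def by blast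
qed

lemma tp_lattice_subgroup:
  assumes L: "tp_lattice V1 E1 V2 E2 L" and H: "subgroup H (BijGroup (V1 \<times> V2))" "H \<subseteq> L"
  shows "tp_lattice V1 E1 V2 E2 H"
  unfolding tp_lattice_def
proof (intro conjI ballI allI impI)
  fix K assume "K \<subseteq> V1 \<times> V2 \<and> finite K"
  then have "finite {g\<in>L. g ` K \<inter> K \<noteq> {}}" using L unfolding tp_lattice_def by blast
  moreover have "{g\<in>H. g ` K \<inter> K \<noteq> {}} \<subseteq> {g\<in>L. g ` K \<inter> K \<noteq> {}}" using H(2) by blast
  ultimately show "finite {g\<in>H. g ` K \<inter> K \<noteq> {}}" by (rule finite_subset[rotated])
qed (use L H in \<open>auto simp: tp_lattice_def\<close>)

lemma cocompact_finite_index: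
  assumes L: "subgroup L (BijGroup (V1 \<times> V2))"
    and H: "finite_index (BijGroup (V1 \<times> V2)\<lparr>carrier := L\<rparr>) H" and coc: "cocompact V1 V2 L"
  shows "cocompact V1 V2 H"
proof -
  let ?G = "BijGroup (V1 \<times> V2)"
  have HG: "subgroup H ?G" "H \<subseteq> L"
    using H subgroup_carrier_update_iff[OF group_BijGroup L] unfolding finite_index_def by blast+
  have car: "f \<in> carrier ?G" if "f \<in> L" for f using subgroup.mem_carrier[OF L that] .
  obtain K where K: "finite K" "K \<subseteq> V1 \<times> V2" "V1 \<times> V2 = (\<Union>g\<in>L. g ` K)"
    using coc unfolding cocompact_def by blast
  obtain R where R: "finite R" "R \<subseteq> L" "L \<subseteq> H <#>\<^bsub>?G\<^esub> R"
    using finite_rcosets_imp_transversal[OF group_BijGroup HG(1) subgroup.subset[OF L]] H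
    unfolding finite_index_def rcosets_carrier_update by blast
  define K' where "K' = (\<Union>b\<in>R. b ` K)"
  have K': "finite K'" "K' \<subseteq> V1 \<times> V2"
    unfolding K'_def using R K BijGroup_apply_closed[OF car] by auto
  have "V1 \<times> V2 \<subseteq> (\<Union>h\<in>H. h ` K')"
  proof
    fix v assume "v \<in> V1 \<times> V2"
    then obtain g k where gk: "g \<in> L" "k \<in> K" "v = g k" using K(3) by blast
    then obtain h b where hb: "h \<in> H" "b \<in> R" "g = h \<otimes>\<^bsub>?G\<^esub> b"
      using R(3) unfolding set_mult_def by blast
    then have "v = h (b k)"
      using gk BijGroup_mult_apply[OF car car] HG(2) R(2) K(2) by blast
    then show "v \<in> (\<Union>h\<in>H. h ` K')" using hb gk(2) unfolding K'_def by blast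
  qed
  moreover have "(\<Union>h\<in>H. h ` K') \<subseteq> V1 \<times> V2"
    using K'(2) HG(2) BijGroup_apply_closed[OF car] by blast
  ultimately show ?thesis unfolding cocompact_def using K' by blast
qed

lemma finite_index_sublattice:
  assumes L: "tp_lattice V1 E1 V2 E2 L" and H: "finite_index (TPG V1 V2 L) H"
    and coc: "cocompact V1 V2 L" and tf: "torsion_free (TPG V1 V2 L)"
    and irr: "irreducible_grp (TPG V1 V2 L)"
  shows "H \<subseteq> L" "tp_lattice V1 E1 V2 E2 H" "cocompact V1 V2 H" "torsion_free (TPG V1 V2 H)"
    "irreducible_grp (TPG V1 V2 H)"
proof -
  let ?G = "BijGroup (V1 \<times> V2)"
  have L': "subgroup L ?G" using L unfolding tp_lattice_def by blast
  have H': "finite_index (?G\<lparr>carrier := L\<rparr>) H" using H unfolding TPG_def .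
  have HG: "subgroup H ?G" "H \<subseteq> L"
    using H' subgroup_carrier_update_iff[OF group_BijGroup L'] unfolding finite_index_def by blast+
  show "H \<subseteq> L" by (fact HG(2))
  show "tp_lattice V1 E1 V2 E2 H" using tp_lattice_subgroup[OF L HG] .
  show "cocompact V1 V2 H" using cocompact_finite_index[OF L' H' coc] .
  show "torsion_free (TPG V1 V2 H)"
    using torsion_free_mono[OF tf[unfolded TPG_def] HG(2)] unfolding TPG_def .
  show "irreducible_grp (TPG V1 V2 H)"
    using irreducible_finite_index[OF group_BijGroup L' H' irr[unfolded TPG_def]] unfolding TPG_def .
qed

section \<open>The quotient of a slice\<close>

locale slice_quotient =
  fixes V1 V2 :: "'v set" and E1 E2 :: "'v \<Rightarrow> 'v \<Rightarrow> bool"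
    and H :: "('v \<times> 'v \<Rightarrow> 'v \<times> 'v) set" and c :: "'v \<Rightarrow> bool" and z0 :: 'v and k :: nat
  assumes regular: "regular_tree V1 E1 k"
    and subgroup: "subgroup H (BijGroup (V1 \<times> V2))"
    and factor_preserving: "\<And>g. g \<in> H \<Longrightarrow> factor_preserving V1 E1 V2 E2 g"
    and colouring: "two_colouring E1 c"
    and colour_preserving: "\<And>g x y. g \<in> H \<Longrightarrow> x \<in> V1 \<Longrightarrow> y \<in> V2 \<Longrightarrow> c (fst (g (x, y))) = c x"
    and cocompact: "cocompact V1 V2 H"
    and z0: "z0 \<in> V2"
begin

abbreviation "G \<equiv> BijGroup (V1 \<times> V2)"
abbreviation "S \<equiv> slice_stab V1 H z0"
abbreviation "vertex_orbit \<equiv> slice_orbit S z0"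
abbreviation "edge_orbit \<equiv> slice_edge_orbit S z0"
abbreviation "QE \<equiv> quotient_edges V1 E1 S z0"

definition act :: "('v \<times> 'v \<Rightarrow> 'v \<times> 'v) \<Rightarrow> 'v \<Rightarrow> 'v" where
  "act g x = fst (g (x, z0))"

lemma tree: "is_tree V1 E1"
  using regular unfolding regular_tree_def by blast

lemma carrier_H: "g \<in> H \<Longrightarrow> g \<in> carrier G"
  using subgroup.mem_carrier[OF subgroup] .

lemma subgroup_S: "subgroup S G"
  unfolding slice_stab_def
  by (rule subgroup_BijGroup_setwise_stabiliser[OF subgroup]) (use z0 in blast)

lemma S_subset: "S \<subseteq> H"
  unfolding slice_stab_def by blast

lemma S_apply:
  assumes "g \<in> S" "x \<in> V1"
  shows "g (x, z0) = (act g x, z0)" "act g x \<in> V1"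
proof -
  have "g (x, z0) \<in> V1 \<times> {z0}" using assms unfolding slice_stab_def by blast
  then show "g (x, z0) = (act g x, z0)" "act g x \<in> V1" unfolding act_def by auto
qed

lemma act_mult:
  assumes g: "g \<in> S" and h: "h \<in> S" and x: "x \<in> V1"
  shows "act (g \<otimes>\<^bsub>G\<^esub> h) x = act g (act h x)"
proof -
  have "(g \<otimes>\<^bsub>G\<^esub> h) (x, z0) = g (h (x, z0))"
    using BijGroup_mult_apply[OF carrier_H carrier_H] g h S_subset x z0 by blast
  also have "\<dots> = (act g (act h x), z0)" using S_apply[OF h x] S_apply[OF g] by simp
  finally show ?thesis unfolding act_def by simp
qed

lemma act_inv:
  assumes g: "g \<in> S" and x: "x \<in> V1"
  shows "act (inv\<^bsub>G\<^esub> g) (act g x) = x"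
proof -
  have "(inv\<^bsub>G\<^esub> g) (g (x, z0)) = (x, z0)"
    using BijGroup_inv_apply(2)[OF carrier_H] g S_subset x z0 by blast
  then show ?thesis using S_apply(1)[OF g x] unfolding act_def by simp
qed

lemma act_colour:
  assumes g: "g \<in> S" and x: "x \<in> V1"
  shows "c (act g x) = c x"
  unfolding act_def using colour_preserving[OF subsetD[OF S_subset g] x z0] .

lemma act_edge:
  assumes g: "g \<in> S" and xy: "x \<in> V1" "y \<in> V1" "E1 x y"
  shows "E1 (act g x) (act g y)"
proof -
  obtain g1 g2 where g12: "graph_iso V1 E1 V1 E1 g1" "\<forall>x\<in>V1. \<forall>y\<in>V2. g (x, y) = (g1 x, g2 y)"
    using factor_preserving[OF subsetD[OF S_subset g]] unfolding factor_preserving_def by blast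
  have "E1 (g1 x) (g1 y)" using g12(1) xy unfolding graph_iso_def by blast
  moreover have "act g x = g1 x" "act g y = g1 y" using g12(2) xy z0 unfolding act_def by auto
  ultimately show ?thesis by simp
qed

lemma slice_stab_memI:
  assumes g: "g \<in> H" and a: "a \<in> V1" and level: "snd (g (a, z0)) = z0"
  shows "g \<in> S"
proof -
  obtain g1 g2 where g12: "graph_iso V1 E1 V1 E1 g1" "\<forall>x\<in>V1. \<forall>y\<in>V2. g (x, y) = (g1 x, g2 y)"
    using factor_preserving[OF g] unfolding factor_preserving_def by blast
  have "g2 z0 = z0" using level g12(2) a z0 by simp
  then have "g ` (V1 \<times> {z0}) = (\<lambda>x. (x, z0)) ` g1 ` V1" using g12(2) z0 by force
  also have "g1 ` V1 = V1" using g12(1) unfolding graph_iso_def bij_betw_def by blast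
  finally have "g ` (V1 \<times> {z0}) = V1 \<times> {z0}" by auto
  then show ?thesis using g unfolding slice_stab_def by blast
qed

lemma slice_orbit_act: "vertex_orbit x = {act g x | g. g \<in> S}"
  unfolding slice_orbit_def act_def ..

lemma slice_edge_orbit_act: "edge_orbit x y = {{act g x, act g y} | g. g \<in> S}"
  unfolding slice_edge_orbit_def act_def ..

lemma act_translate:
  assumes g: "g \<in> S" and xy: "x \<in> V1" "y \<in> V1"
  shows "{P (act h (act g x)) (act h (act g y)) | h. h \<in> S} = {P (act h x) (act h y) | h. h \<in> S}"
proof (intro equalityI subsetI)
  fix u assume "u \<in> {P (act h (act g x)) (act h (act g y)) | h. h \<in> S}"
  then obtain h where h: "h \<in> S" "u = P (act h (act g x)) (act h (act g y))" by blast
  then have "u = P (act (h \<otimes>\<^bsub>G\<^esub> g) x) (act (h \<otimes>\<^bsub>G\<^esub> g) y)"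
    using act_mult[OF h(1) g] xy by simp
  then show "u \<in> {P (act h x) (act h y) | h. h \<in> S}"
    using subgroup.m_closed[OF subgroup_S h(1) g] by blast
next
  fix u assume "u \<in> {P (act h x) (act h y) | h. h \<in> S}"
  then obtain h where h: "h \<in> S" "u = P (act h x) (act h y)" by blast
  have ig: "inv\<^bsub>G\<^esub> g \<in> S" using subgroup.m_inv_closed[OF subgroup_S g] .
  have "act (h \<otimes>\<^bsub>G\<^esub> inv\<^bsub>G\<^esub> g) (act g z) = act h z" if "z \<in> V1" for z
    using act_mult[OF h(1) ig S_apply(2)[OF g that]] act_inv[OF g that] by simp
  then have "u = P (act (h \<otimes>\<^bsub>G\<^esub> inv\<^bsub>G\<^esub> g) (act g x)) (act (h \<otimes>\<^bsub>G\<^esub> inv\<^bsub>G\<^esub> g) (act g y))"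
    using h(2) xy by simp
  then show "u \<in> {P (act h (act g x)) (act h (act g y)) | h. h \<in> S}"
    using subgroup.m_closed[OF subgroup_S h(1) ig] by blast
qed

lemma orbit_act: "g \<in> S \<Longrightarrow> x \<in> V1 \<Longrightarrow> vertex_orbit (act g x) = vertex_orbit x"
  using act_translate[of g x x "\<lambda>a b. a"] unfolding slice_orbit_act by simp

lemma edge_orbit_act: "g \<in> S \<Longrightarrow> x \<in> V1 \<Longrightarrow> y \<in> V1 \<Longrightarrow> edge_orbit (act g x) (act g y) = edge_orbit x y"
  using act_translate[of g x y "\<lambda>a b. {a, b}"] unfolding slice_edge_orbit_act by simp

lemma orbit_self: "x \<in> V1 \<Longrightarrow> x \<in> vertex_orbit x"
  using subgroup.one_closed[OF subgroup_S] BijGroup_one_apply[of "(x, z0)" "V1 \<times> V2"] z0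
  unfolding slice_orbit_def by force

lemma orbit_memD:
  assumes x: "x \<in> V1" and y: "y \<in> vertex_orbit x"
  shows "y \<in> V1" "c y = c x" "vertex_orbit y = vertex_orbit x"
proof -
  obtain g where "g \<in> S" "y = act g x" using y unfolding slice_orbit_act by blast
  then show "y \<in> V1" "c y = c x" "vertex_orbit y = vertex_orbit x"
    using S_apply(2) act_colour orbit_act x by auto
qed

lemma Union_edge_orbit: "\<Union> (edge_orbit x y) = vertex_orbit x \<union> vertex_orbit y"
  unfolding slice_edge_orbit_def slice_orbit_def by blast

lemma edge_orbit_commute: "edge_orbit x y = edge_orbit y x"
  unfolding slice_edge_orbit_def by (simp add: insert_commute)

lemma orbit_neq_if_edge: "x \<in> V1 \<Longrightarrow> y \<in> V1 \<Longrightarrow> E1 x y \<Longrightarrow> vertex_orbit x \<noteq> vertex_orbit y"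
  using orbit_self orbit_memD(2) colouring unfolding two_colouring_def by metis

text \<open>Orbits inherit the colour c, so the quotient U_{1,z0} is bipartite; side b Q is the
  endpoint of colour b of the quotient edge Q.\<close>
definition side :: "bool \<Rightarrow> 'v set set \<Rightarrow> 'v set" where
  "side b Q = {v \<in> \<Union> Q. c v = b}"

lemma side_edge_orbit:
  assumes "x \<in> V1" "y \<in> V1" "E1 x y"
  shows "side (c x) (edge_orbit x y) = vertex_orbit x"
proof -
  have "c y \<noteq> c x" using colouring assms(3) unfolding two_colouring_def by metis
  then show ?thesis
    unfolding side_def Union_edge_orbit using orbit_memD(2) assms(1,2) orbit_self by blast
qed

lemma quotient_edgeE:
  assumes "Q \<in> QE"
  obtains x y where "x \<in> V1" "y \<in> V1" "E1 x y" "Q = edge_orbit x y"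
  using assms unfolding quotient_edges_def by blast

lemma side_quotient_edge:
  assumes Q: "Q \<in> QE" and a: "a \<in> \<Union> Q"
  shows "a \<in> V1" "side (c a) Q = vertex_orbit a"
proof -
  obtain x y where xy: "x \<in> V1" "y \<in> V1" "E1 x y" "Q = edge_orbit x y"
    using Q by (rule quotient_edgeE)
  have claim: "a \<in> V1 \<and> side (c a) (edge_orbit u v) = vertex_orbit a"
    if "u \<in> V1" "v \<in> V1" "E1 u v" "a \<in> vertex_orbit u" for u v
    using orbit_memD[OF that(1,4)] side_edge_orbit[OF that(1-3)] by simp
  have "a \<in> vertex_orbit x \<or> a \<in> vertex_orbit y" using a xy(4) Union_edge_orbit by blast
  then have "a \<in> V1 \<and> side (c a) Q = vertex_orbit a"
  proof
    assume "a \<in> vertex_orbit x"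
    then show ?thesis using claim[OF xy(1-3)] xy(4) by simp
  next
    assume "a \<in> vertex_orbit y"
    then show ?thesis
      using claim[OF xy(2,1) tree_edge_sym[OF tree xy(3)]] xy(4) edge_orbit_commute by simp
  qed
  then show "a \<in> V1" "side (c a) Q = vertex_orbit a" by auto
qed

lemma share_vertex_side:
  assumes Q: "Q1 \<in> QE" "Q2 \<in> QE" and share: "share_vertex S z0 Q1 Q2"
  shows "side True Q1 = side True Q2 \<or> side False Q1 = side False Q2"
proof -
  obtain a b where ab: "a \<in> \<Union> Q1" "b \<in> \<Union> Q2" "vertex_orbit a = vertex_orbit b"
    using share unfolding share_vertex_def by blast
  have "c b = c a"
    using orbit_memD(2) side_quotient_edge(1)[OF Q(1) ab(1)] orbit_self
      side_quotient_edge(1)[OF Q(2) ab(2)] ab(3)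
    by metis
  then have "side (c a) Q1 = side (c a) Q2"
    using side_quotient_edge(2)[OF Q(1) ab(1)] side_quotient_edge(2)[OF Q(2) ab(2)] ab(3) by simp
  then show ?thesis by (cases "c a") auto
qed

lemma quotient_edges_at:
  assumes x: "x \<in> V1"
  shows "{Q \<in> QE. x \<in> \<Union> Q} \<subseteq> (\<lambda>w. edge_orbit x w) ` {w. E1 x w}"
proof
  fix Q assume "Q \<in> {Q \<in> QE. x \<in> \<Union> Q}"
  then have Q: "Q \<in> QE" "x \<in> \<Union> Q" by auto
  obtain u v where uv: "u \<in> V1" "v \<in> V1" "E1 u v" "Q = edge_orbit u v"
    using Q(1) by (rule quotient_edgeE)
  have "\<exists>u v. u \<in> V1 \<and> v \<in> V1 \<and> E1 u v \<and> Q = edge_orbit u v \<and> x \<in> vertex_orbit u"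
    using Q(2) uv tree_edge_sym[OF tree uv(3)] edge_orbit_commute Union_edge_orbit by blast
  then obtain u v g where "u \<in> V1" "v \<in> V1" "E1 u v" "Q = edge_orbit u v" "g \<in> S" "x = act g u"
    unfolding slice_orbit_act by blast
  then show "Q \<in> (\<lambda>w. edge_orbit x w) ` {w. E1 x w}"
    using act_edge edge_orbit_act by blast
qed

lemma quotient_edges_at_finite_card:
  assumes "x \<in> V1"
  shows "finite {Q \<in> QE. x \<in> \<Union> Q}" "card {Q \<in> QE. x \<in> \<Union> Q} \<le> k"
proof -
  have nbrs: "finite {w. E1 x w}" "card {w. E1 x w} = k"
    using regular assms unfolding regular_tree_def by blast+
  show "finite {Q \<in> QE. x \<in> \<Union> Q}"
    using finite_subset[OF quotient_edges_at[OF assms]] nbrs(1) by blast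
  have "card {Q \<in> QE. x \<in> \<Union> Q} \<le> card ((\<lambda>w. edge_orbit x w) ` {w. E1 x w})"
    using card_mono[OF _ quotient_edges_at[OF assms]] nbrs(1) by blast
  also have "\<dots> \<le> k" using card_image_le[OF nbrs(1)] nbrs(2) by simp
  finally show "card {Q \<in> QE. x \<in> \<Union> Q} \<le> k" .
qed

lemma card_side_le: "card {Q \<in> QE. side b Q = U} \<le> k"
proof (cases "{Q \<in> QE. side b Q = U} = {}")
  case True
  then show ?thesis by (metis card.empty le0)
next
  case False
  then obtain Q0 where Q0: "Q0 \<in> QE" "side b Q0 = U" by blast
  obtain x y where xy: "x \<in> V1" "y \<in> V1" "E1 x y" "Q0 = edge_orbit x y"
    using Q0(1) by (rule quotient_edgeE)
  have "c x \<noteq> c y" using colouring xy(3) unfolding two_colouring_def by blast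
  then obtain a where a: "a \<in> \<Union> Q0" "c a = b"
    using orbit_self xy Union_edge_orbit by (cases "c x = b") blast+
  have aV: "a \<in> V1" and aU: "a \<in> U"
    using side_quotient_edge[OF Q0(1) a(1)] orbit_self Q0(2) a(2) by auto
  have "{Q \<in> QE. side b Q = U} \<subseteq> {Q \<in> QE. a \<in> \<Union> Q}"
    using aU unfolding side_def by blast
  then show ?thesis using quotient_edges_at_finite_card[OF aV] card_mono le_trans by blast
qed

lemma orbit_representatives:
  "\<exists>R. finite R \<and> R \<subseteq> V1 \<and> (\<forall>x\<in>V1. \<exists>r\<in>R. x \<in> vertex_orbit r)"
proof -
  obtain K where K: "finite K" "K \<subseteq> V1 \<times> V2" "V1 \<times> V2 = (\<Union>g\<in>H. g ` K)"
    using cocompact unfolding cocompact_def by blast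
  define K0 where "K0 = {p \<in> K. \<exists>h\<in>H. snd (h p) = z0}"
  define lift where "lift p = (SOME h. h \<in> H \<and> snd (h p) = z0)" for p
  have lift: "lift p \<in> H" "snd (lift p p) = z0" if "p \<in> K0" for p
    using someI_ex[of "\<lambda>h. h \<in> H \<and> snd (h p) = z0"] that unfolding K0_def lift_def by blast+
  show ?thesis
  proof (intro exI conjI ballI)
    show "finite ((\<lambda>p. fst (lift p p)) ` K0)" using K(1) unfolding K0_def by simp
    show "(\<lambda>p. fst (lift p p)) ` K0 \<subseteq> V1"
      using lift(1) K(2) BijGroup_apply_closed[OF carrier_H] unfolding K0_def by force
    fix x assume x: "x \<in> V1"
    then obtain h p where hp: "h \<in> H" "p \<in> K" "h p = (x, z0)" using K(3) z0 by force
    have "snd (h p) = z0" using hp(3) by simp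
    then have p: "p \<in> K0" "p \<in> V1 \<times> V2" using hp(1,2) K(2) unfolding K0_def by auto
    define r where "r = fst (lift p p)"
    have lr: "lift p p = (r, z0)" "r \<in> V1"
      using lift[OF p(1)] BijGroup_apply_closed[OF carrier_H[OF lift(1)[OF p(1)]] p(2)]
      unfolding r_def by (metis prod.collapse, force)
    let ?s = "h \<otimes>\<^bsub>G\<^esub> inv\<^bsub>G\<^esub> lift p"
    have sH: "?s \<in> H"
      using subgroup.m_closed[OF subgroup hp(1) subgroup.m_inv_closed[OF subgroup lift(1)[OF p(1)]]] .
    have "?s (r, z0) = h ((inv\<^bsub>G\<^esub> lift p) (r, z0))"
      using BijGroup_mult_apply[OF carrier_H[OF hp(1)]
          group.inv_closed[OF group_BijGroup carrier_H[OF lift(1)[OF p(1)]]]] lr(2) z0 by simp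
    also have "\<dots> = (x, z0)"
      using BijGroup_inv_apply(2)[OF carrier_H[OF lift(1)[OF p(1)]] p(2)] hp(3) lr(1) by simp
    finally have s: "?s (r, z0) = (x, z0)" .
    then have "?s \<in> S" using slice_stab_memI[OF sH lr(2)] by simp
    then have "x \<in> vertex_orbit r" using s unfolding slice_orbit_def by force
    then show "\<exists>r\<in>(\<lambda>p. fst (lift p p)) ` K0. x \<in> vertex_orbit r" using p(1) r_def by blast
  qed
qed

lemma finite_quotient_edges: "finite QE"
proof -
  obtain R where R: "finite R" "R \<subseteq> V1" "\<forall>x\<in>V1. \<exists>r\<in>R. x \<in> vertex_orbit r"
    using orbit_representatives by blast
  have "QE \<subseteq> (\<Union>r\<in>R. {Q \<in> QE. r \<in> \<Union> Q})"
  proof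
    fix Q assume Q: "Q \<in> QE"
    then obtain x y where xy: "x \<in> V1" "y \<in> V1" "E1 x y" "Q = edge_orbit x y"
      by (rule quotient_edgeE)
    then obtain r where "r \<in> R" "x \<in> vertex_orbit r" using R(3) by blast
    then have "vertex_orbit x = vertex_orbit r" using orbit_memD(3) R(2) by blast
    then have "r \<in> \<Union> Q" using orbit_self[of r] R(2) \<open>r \<in> R\<close> xy(4) Union_edge_orbit by blast
    then show "Q \<in> (\<Union>r\<in>R. {Q \<in> QE. r \<in> \<Union> Q})" using Q \<open>r \<in> R\<close> by blast
  qed
  moreover have "finite (\<Union>r\<in>R. {Q \<in> QE. r \<in> \<Union> Q})"
    using R(1,2) quotient_edges_at_finite_card(1) by (intro finite_UN_I) blast+
  ultimately show ?thesis by (rule finite_subset)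
qed

theorem quotient_edge_labelling:
  fixes labels :: "'l list"
  assumes labels: "distinct labels" "length labels = k"
  shows "\<exists>lab :: 'v set set \<Rightarrow> 'l. \<forall>Q1\<in>QE. \<forall>Q2\<in>QE.
    Q1 \<noteq> Q2 \<and> share_vertex S z0 Q1 Q2 \<longrightarrow> lab Q1 \<noteq> lab Q2"
proof -
  obtain col where "proper_edge_colouring (side True) (side False) k QE col"
    using bipartite_edge_colouring[OF finite_quotient_edges card_side_le card_side_le] ..
  then have col: "\<forall>Q\<in>QE. col Q < k"
    "\<And>Q1 Q2. Q1 \<in> QE \<Longrightarrow> Q2 \<in> QE \<Longrightarrow> Q1 \<noteq> Q2 \<Longrightarrow>
       side True Q1 = side True Q2 \<or> side False Q1 = side False Q2 \<Longrightarrow> col Q1 \<noteq> col Q2"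
    unfolding proper_edge_colouring_def by blast+
  have "labels ! col Q1 \<noteq> labels ! col Q2"
    if "Q1 \<in> QE" "Q2 \<in> QE" "Q1 \<noteq> Q2" "share_vertex S z0 Q1 Q2" for Q1 Q2
    using col(2)[OF that(1-3) share_vertex_side[OF that(1,2,4)]] col(1) that(1,2) labels
      nth_eq_iff_index_eq by metis
  then show ?thesis by (intro exI[of _ "\<lambda>Q. labels ! col Q"]) blast
qed

end

section \<open>Type-preserving automorphisms\<close>

locale two_coloured_trees =
  fixes V1 V2 :: "'v set" and E1 E2 :: "'v \<Rightarrow> 'v \<Rightarrow> bool" and c1 c2 :: "'v \<Rightarrow> bool"
  assumes tree1: "is_tree V1 E1" and tree2: "is_tree V2 E2"
    and colouring1: "two_colouring E1 c1" and colouring2: "two_colouring E2 c2"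
begin

definition vertex_type :: "'v \<times> 'v \<Rightarrow> bool \<times> bool" where
  "vertex_type v = (c1 (fst v), c2 (snd v))"

definition type_preserving :: "('v \<times> 'v \<Rightarrow> 'v \<times> 'v) set \<Rightarrow> ('v \<times> 'v \<Rightarrow> 'v \<times> 'v) set" where
  "type_preserving L = {f\<in>L. \<forall>v\<in>V1 \<times> V2. vertex_type (f v) = vertex_type v}"

lemma prod_aut_vertex_type_cong:
  assumes f: "prod_aut V1 E1 V2 E2 f" and v: "v \<in> V1 \<times> V2" "v' \<in> V1 \<times> V2"
    and eq: "vertex_type v = vertex_type v'"
  shows "vertex_type (f v) = vertex_type (f v')"
proof -
  obtain x y x' y' where xy: "v = (x, y)" "v' = (x', y')" "x \<in> V1" "y \<in> V2" "x' \<in> V1" "y' \<in> V2"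
    using v by blast
  have c: "c1 x = c1 x'" "c2 y = c2 y'" using eq xy unfolding vertex_type_def by auto
  show ?thesis
    using f unfolding prod_aut_def
  proof
    assume "factor_preserving V1 E1 V2 E2 f"
    then obtain g1 g2 where g: "graph_iso V1 E1 V1 E1 g1" "graph_iso V2 E2 V2 E2 g2"
      "\<forall>x\<in>V1. \<forall>y\<in>V2. f (x, y) = (g1 x, g2 y)" unfolding factor_preserving_def by blast
    then show ?thesis
      using graph_iso_two_colouring_cong[OF g(1) tree1 colouring1 colouring1 xy(3,5) c(1)]
        graph_iso_two_colouring_cong[OF g(2) tree2 colouring2 colouring2 xy(4,6) c(2)] xy
      unfolding vertex_type_def by simp
  next
    assume "factor_exchanging V1 E1 V2 E2 f"
    then obtain h1 h2 where h: "graph_iso V2 E2 V1 E1 h1" "graph_iso V1 E1 V2 E2 h2"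
      "\<forall>x\<in>V1. \<forall>y\<in>V2. f (x, y) = (h1 y, h2 x)" unfolding factor_exchanging_def by blast
    then show ?thesis
      using graph_iso_two_colouring_cong[OF h(1) tree2 colouring2 colouring1 xy(4,6) c(2)]
        graph_iso_two_colouring_cong[OF h(2) tree1 colouring1 colouring2 xy(3,5) c(1)] xy
      unfolding vertex_type_def by simp
  qed
qed

lemma subgroup_type_preserving:
  "subgroup L (BijGroup (V1 \<times> V2)) \<Longrightarrow> subgroup (type_preserving L) (BijGroup (V1 \<times> V2))"
  unfolding type_preserving_def by (rule subgroup_BijGroup_invariant)

text \<open>The coset of a in the type-preserving subgroup is determined by the way a permutes
  the four vertex types, so there are at most finitely many cosets.\<close>
lemma finite_index_type_preserving:
  assumes L: "tp_lattice V1 E1 V2 E2 L"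
  shows "finite_index (TPG V1 V2 L) (type_preserving L)"
  unfolding TPG_def
proof (rule finite_index_of_finite_invariant[OF group_BijGroup])
  let ?G = "BijGroup (V1 \<times> V2)"
  let ?\<phi> = "\<lambda>a. {(vertex_type v, vertex_type (a v)) | v. v \<in> V1 \<times> V2}"
  show L': "subgroup L ?G" using L unfolding tp_lattice_def by blast
  show "subgroup (type_preserving L) ?G" using subgroup_type_preserving[OF L'] .
  show "type_preserving L \<subseteq> L" unfolding type_preserving_def by blast
  show "finite (?\<phi> ` L)" by (rule finite_subset[of _ UNIV]) simp_all
  have car: "f \<in> carrier ?G" if "f \<in> L" for f using subgroup.mem_carrier[OF L' that] .
  fix a b assume a: "a \<in> L" and b: "b \<in> L" and eq: "?\<phi> a = ?\<phi> b"
  have ib: "inv\<^bsub>?G\<^esub> b \<in> L" using subgroup.m_inv_closed[OF L' b] .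
  have "vertex_type ((a \<otimes>\<^bsub>?G\<^esub> inv\<^bsub>?G\<^esub> b) w) = vertex_type w" if w: "w \<in> V1 \<times> V2" for w
  proof -
    define v where "v = (inv\<^bsub>?G\<^esub> b) w"
    have v: "v \<in> V1 \<times> V2" "b v = w"
      unfolding v_def using BijGroup_apply_closed[OF car[OF ib] w] BijGroup_inv_apply(1)[OF car[OF b] w]
      by auto
    then have "(vertex_type v, vertex_type w) \<in> ?\<phi> a" using eq by blast
    then obtain v' where
      v': "v' \<in> V1 \<times> V2" "vertex_type v = vertex_type v'" "vertex_type w = vertex_type (a v')"
      by blast
    have "(a \<otimes>\<^bsub>?G\<^esub> inv\<^bsub>?G\<^esub> b) w = a v"
      unfolding v_def using BijGroup_mult_apply[OF car[OF a] car[OF ib] w] .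
    then show ?thesis
      using prod_aut_vertex_type_cong[OF _ v(1) v'(1,2)] L a v'(3) unfolding tp_lattice_def by simp
  qed
  then show "a \<otimes>\<^bsub>?G\<^esub> inv\<^bsub>?G\<^esub> b \<in> type_preserving L"
    unfolding type_preserving_def using subgroup.m_closed[OF L' a ib] by blast
qed

lemma type_preserving_factor_preserving:
  assumes f: "f \<in> type_preserving L" "prod_aut V1 E1 V2 E2 f" and edge: "E1 x0 x1"
  shows "factor_preserving V1 E1 V2 E2 f"
proof -
  have "\<not> factor_exchanging V1 E1 V2 E2 f"
  proof
    assume "factor_exchanging V1 E1 V2 E2 f"
    then obtain h1 h2 where h: "\<forall>x\<in>V1. \<forall>y\<in>V2. f (x, y) = (h1 y, h2 x)"
      unfolding factor_exchanging_def by blast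
    obtain z where z: "z \<in> V2" using tree2 unfolding is_tree_def by blast
    have x: "x0 \<in> V1" "x1 \<in> V1" using tree_edge_in_vertices[OF tree1 edge] by auto
    have "vertex_type (f (x0, z)) = vertex_type (x0, z)" "vertex_type (f (x1, z)) = vertex_type (x1, z)"
      using f(1) x z unfolding type_preserving_def by blast+
    then have "c1 (h1 z) = c1 x0" "c1 (h1 z) = c1 x1" using h x z unfolding vertex_type_def by simp_all
    then show False using colouring1 edge unfolding two_colouring_def by auto
  qed
  then show ?thesis using f(2) unfolding prod_aut_def by blast
qed

lemma slice_quotient_type_preserving:
  assumes L: "tp_lattice V1 E1 V2 E2 L" and coc: "cocompact V1 V2 (type_preserving L)"
    and reg: "regular_tree V1 E1 k" "0 < k" and z0: "z0 \<in> V2"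
  shows "slice_quotient V1 V2 E1 E2 (type_preserving L) c1 z0 k"
proof (rule slice_quotient.intro)
  have L': "subgroup L (BijGroup (V1 \<times> V2))" "\<And>f. f \<in> L \<Longrightarrow> prod_aut V1 E1 V2 E2 f"
    using L unfolding tp_lattice_def by blast+
  show "subgroup (type_preserving L) (BijGroup (V1 \<times> V2))" using subgroup_type_preserving[OF L'(1)] .
  obtain x0 x1 where "E1 x0 x1" using regular_tree_has_edge[OF reg] .
  then show "factor_preserving V1 E1 V2 E2 g" if "g \<in> type_preserving L" for g
    using type_preserving_factor_preserving[OF that] L'(2) that unfolding type_preserving_def by blast
  show "c1 (fst (g (x, y))) = c1 x" if "g \<in> type_preserving L" "x \<in> V1" "y \<in> V2" for g x y
    using that unfolding type_preserving_def vertex_type_def by auto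
qed (fact reg(1) colouring1 coc z0)+

end

theorem lemma4p3:
  fixes V1 V2 :: "'v set" and E1 E2 :: "'v \<Rightarrow> 'v \<Rightarrow> bool"
    and L0 :: "('v \<times> 'v \<Rightarrow> 'v \<times> 'v) set"
  assumes "regular_tree V1 E1 4" and "regular_tree V2 E2 4"
    and "tp_lattice V1 E1 V2 E2 L0" and "cocompact V1 V2 L0"
    and "torsion_free (TPG V1 V2 L0)" and "irreducible_grp (TPG V1 V2 L0)"
    and "residually_finite (TPG V1 V2 L0)"
  shows "\<exists>L z0. L \<subseteq> L0 \<and> finite_index (TPG V1 V2 L0) L \<and>
           tp_lattice V1 E1 V2 E2 L \<and> cocompact V1 V2 L \<and>
           torsion_free (TPG V1 V2 L) \<and> irreducible_grp (TPG V1 V2 L) \<and>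
           (\<forall>f\<in>L. factor_preserving V1 E1 V2 E2 f) \<and> z0 \<in> V2 \<and>
           (\<forall>x\<in>V1. \<forall>y\<in>V1. E1 x y \<longrightarrow>
              slice_orbit (slice_stab V1 L z0) z0 x \<noteq> slice_orbit (slice_stab V1 L z0) z0 y) \<and>
           (\<exists>lab :: 'v set set \<Rightarrow> wlabel.
              \<forall>e1\<in>quotient_edges V1 E1 (slice_stab V1 L z0) z0.
              \<forall>e2\<in>quotient_edges V1 E1 (slice_stab V1 L z0) z0.
                e1 \<noteq> e2 \<and> share_vertex (slice_stab V1 L z0) z0 e1 e2 \<longrightarrow> lab e1 \<noteq> lab e2)"
proof -
  have T: "is_tree V1 E1" "is_tree V2 E2" using assms(1,2) unfolding regular_tree_def by blast+
  obtain c1 c2 where "two_colouring E1 c1" "two_colouring E2 c2"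
    using tree_two_colouring[OF T(1)] tree_two_colouring[OF T(2)] by blast
  then interpret two_coloured_trees V1 V2 E1 E2 c1 c2 using T by unfold_locales
  let ?L = "type_preserving L0"
  have index: "finite_index (TPG V1 V2 L0) ?L" by (rule finite_index_type_preserving[OF assms(3)])
  note sublattice = finite_index_sublattice[OF assms(3) index assms(4-6)]
  obtain z0 where "z0 \<in> V2" using T(2) unfolding is_tree_def by blast
  then interpret slice_quotient V1 V2 E1 E2 ?L c1 z0 4
    using slice_quotient_type_preserving[OF assms(3) sublattice(3) assms(1)] by simp
  obtain lab :: "'v set set \<Rightarrow> wlabel" where
    "\<forall>Q1\<in>QE. \<forall>Q2\<in>QE. Q1 \<noteq> Q2 \<and> share_vertex S z0 Q1 Q2 \<longrightarrow> lab Q1 \<noteq> lab Q2"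
    using quotient_edge_labelling[of "[w1, w2, w3, w4]"] by auto
  then show ?thesis
    using sublattice index factor_preserving cocompact z0 orbit_neq_if_edge
    by (intro exI[of _ ?L] exI[of _ z0]) blast
qed

end
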